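(* In the static load balancing game described in the context, suppose all initial loads are zero, i.e., $s_j^0=0$ for all $j\in[m]$. Then $\mathrm{PoA}\le 3$.
   Context: Static load balancing game: there are $m$ servers $[m]$ with service rates $\mu_j>0$ and initial loads $s_j^0\ge0$, and $n$ players $[n]$; player $i$ holds a job of length $\lambda_i>0$. Player $i$'s action set is $A_i=\{a_i=(a_{i1},\dots,a_{im}):\sum_j a_{ij}=1,\ a_{ij}\ge0\}$. The cost of player $i$ is $$D_i(a)=\sum_{j=1}^m \lambda_i a_{ij}\left(\frac{\lambda_i a_{ij}}{2\mu_j}+\frac{s_j^0+\sum_{k\neq i}\lambda_k a_{kj}}{\mu_j}\right).$$ A pure Nash equilibrium (NE) is a profile $a$ with $D_i(a_i,a_{-i})\le D_i(a_i',a_{-i})$ for all $i$, $a_i'\in A_i$. The price of anarchy is $\mathrm{PoA}=\dfrac{\max_{a\in\mathrm{NE}}\sum_iD_i(a)}{\min_a\sum_iD_i(a)}$. *)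

theory Defs
  imports Complex_Main
begin

text \<open>Servers are indexed by {..<m}, players by {..<n}.
  mu j: service rate, s0 j: initial load, lam i: job length of player i.
  A profile is a :: nat => nat => real, where a i j is the fraction of
  player i's job sent to server j.\<close>

definition is_action :: "nat \<Rightarrow> (nat \<Rightarrow> real) \<Rightarrow> bool" where
  "is_action m x \<longleftrightarrow> (\<forall>j<m. x j \<ge> 0) \<and> (\<Sum>j<m. x j) = 1"

definition is_profile :: "nat \<Rightarrow> nat \<Rightarrow> (nat \<Rightarrow> nat \<Rightarrow> real) \<Rightarrow> bool" where
  "is_profile m n a \<longleftrightarrow> (\<forall>i<n. is_action m (a i))"

definition cost ::
  "nat \<Rightarrow> nat \<Rightarrow> (nat \<Rightarrow> real) \<Rightarrow> (nat \<Rightarrow> real) \<Rightarrow> (nat \<Rightarrow> real)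
     \<Rightarrow> (nat \<Rightarrow> nat \<Rightarrow> real) \<Rightarrow> nat \<Rightarrow> real" where
  "cost m n mu s0 lam a i =
     (\<Sum>j<m. lam i * a i j *
        (lam i * a i j / (2 * mu j)
         + (s0 j + (\<Sum>k\<in>{..<n} - {i}. lam k * a k j)) / mu j))"

definition social_cost ::
  "nat \<Rightarrow> nat \<Rightarrow> (nat \<Rightarrow> real) \<Rightarrow> (nat \<Rightarrow> real) \<Rightarrow> (nat \<Rightarrow> real)
     \<Rightarrow> (nat \<Rightarrow> nat \<Rightarrow> real) \<Rightarrow> real" where
  "social_cost m n mu s0 lam a = (\<Sum>i<n. cost m n mu s0 lam a i)"

definition is_NE ::
  "nat \<Rightarrow> nat \<Rightarrow> (nat \<Rightarrow> real) \<Rightarrow> (nat \<Rightarrow> real) \<Rightarrow> (nat \<Rightarrow> real)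
     \<Rightarrow> (nat \<Rightarrow> nat \<Rightarrow> real) \<Rightarrow> bool" where
  "is_NE m n mu s0 lam a \<longleftrightarrow> is_profile m n a \<and>
     (\<forall>i<n. \<forall>x. is_action m x \<longrightarrow>
        cost m n mu s0 lam a i \<le> cost m n mu s0 lam (a(i := x)) i)"

end

theory Submission
  imports Defs
begin

(* Write x_ij = lam_i a_ij and L_j = sum_i x_ij for the load of server j. With zero
   initial loads the social cost is sum_j (L_j^2 - (sum_i x_ij^2) / 2) / mu_j, so it lies
   between sum_j L_j^2 / (2 mu_j) and sum_j L_j^2 / mu_j. A player's cost along a segment
   of its own actions is a quadratic polynomial, so at an equilibrium a the first-order
   condition sum_j lam_i (b_ij - a_ij) L_j / mu_j >= 0 holds for every action b_i.
   Summing over i gives sum_j (M_j - L_j) L_j / mu_j >= 0 for the loads M of any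
   profile b, and since (M - L) L <= (M^2 - L^2) / 2 this forces
   sum_j L_j^2 / mu_j <= sum_j M_j^2 / mu_j. Chaining the bounds gives
   SC(a) <= 2 SC(b), which is stronger than the factor 3. *)

definition load :: "nat \<Rightarrow> (nat \<Rightarrow> real) \<Rightarrow> (nat \<Rightarrow> nat \<Rightarrow> real) \<Rightarrow> nat \<Rightarrow> real" where
  "load n lam a j = (\<Sum>k<n. lam k * a k j)"

lemma load_minus_player:
  assumes "i < n"
  shows "(\<Sum>k\<in>{..<n} - {i}. lam k * a k j) = load n lam a j - lam i * a i j"
  using assms by (simp add: load_def sum_diff1)

lemma cost_eq_load:
  assumes "i < n"
  shows "cost m n mu s0 lam a i =
    (\<Sum>j<m. lam i * a i j * (s0 j + load n lam a j - lam i * a i j / 2) / mu j)"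
  unfolding cost_def load_minus_player[OF assms]
proof (intro sum.cong refl)
  fix j
  show "lam i * a i j * (lam i * a i j / (2 * mu j) + (s0 j + (load n lam a j - lam i * a i j)) / mu j) =
    lam i * a i j * (s0 j + load n lam a j - lam i * a i j / 2) / mu j"
    by (cases "mu j = 0") (simp_all add: field_simps)
qed

lemma cost_fun_upd_self:
  "cost m n mu s0 lam (a(i := z)) i =
    (\<Sum>j<m. lam i * z j * (lam i * z j / (2 * mu j)
       + (s0 j + (\<Sum>k\<in>{..<n} - {i}. lam k * a k j)) / mu j))"
  unfolding cost_def by (intro sum.cong refl) auto

lemma social_cost_eq_load:
  "social_cost m n mu s0 lam a =
    (\<Sum>j<m. ((s0 j + load n lam a j) * load n lam a j
               - (\<Sum>i<n. (lam i * a i j)\<^sup>2) / 2) / mu j)"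
proof -
  have "social_cost m n mu s0 lam a =
      (\<Sum>i<n. \<Sum>j<m. lam i * a i j * (s0 j + load n lam a j - lam i * a i j / 2) / mu j)"
    unfolding social_cost_def by (intro sum.cong refl) (simp add: cost_eq_load)
  also have "\<dots> = (\<Sum>j<m. \<Sum>i<n. lam i * a i j * (s0 j + load n lam a j - lam i * a i j / 2) / mu j)"
    by (rule sum.swap)
  also have "\<dots> = (\<Sum>j<m. ((s0 j + load n lam a j) * load n lam a j
               - (\<Sum>i<n. (lam i * a i j)\<^sup>2) / 2) / mu j)"
  proof (intro sum.cong refl)
    fix j
    define c where "c = s0 j + load n lam a j"
    have "(\<Sum>i<n. lam i * a i j * (c - lam i * a i j / 2) / mu j) =
        (\<Sum>i<n. c * (lam i * a i j) - (lam i * a i j)\<^sup>2 / 2) / mu j"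
      by (simp add: sum_divide_distrib power2_eq_square algebra_simps)
    also have "\<dots> = (c * load n lam a j - (\<Sum>i<n. (lam i * a i j)\<^sup>2) / 2) / mu j"
      by (simp add: load_def sum_subtractf sum_distrib_left sum_divide_distrib)
    finally show "(\<Sum>i<n. lam i * a i j * (s0 j + load n lam a j - lam i * a i j / 2) / mu j) =
        ((s0 j + load n lam a j) * load n lam a j - (\<Sum>i<n. (lam i * a i j)\<^sup>2) / 2) / mu j"
      by (simp add: c_def)
  qed
  finally show ?thesis .
qed

lemma sum_power2_le_power2_sum:
  fixes x :: "'a \<Rightarrow> real"
  assumes "finite A" and "\<forall>i\<in>A. 0 \<le> x i"
  shows "(\<Sum>i\<in>A. (x i)\<^sup>2) \<le> (\<Sum>i\<in>A. x i)\<^sup>2"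
proof -
  have "(\<Sum>i\<in>A. (x i)\<^sup>2) \<le> (\<Sum>i\<in>A. x i * (\<Sum>k\<in>A. x k))"
  proof (rule sum_mono)
    fix i assume "i \<in> A"
    then have "x i \<le> (\<Sum>k\<in>A. x k)"
      using assms by (intro member_le_sum) auto
    then show "(x i)\<^sup>2 \<le> x i * (\<Sum>k\<in>A. x k)"
      using assms \<open>i \<in> A\<close> by (simp add: power2_eq_square mult_left_mono)
  qed
  also have "\<dots> = (\<Sum>i\<in>A. x i)\<^sup>2"
    by (simp add: power2_eq_square sum_distrib_right)
  finally show ?thesis .
qed

lemma social_cost_le_sum_load_sq:
  assumes "\<forall>j<m. mu j > 0" and "\<forall>j<m. s0 j = 0"
  shows "social_cost m n mu s0 lam a \<le> (\<Sum>j<m. (load n lam a j)\<^sup>2 / mu j)"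
  unfolding social_cost_eq_load
proof (rule sum_mono)
  fix j assume "j \<in> {..<m}"
  then show "((s0 j + load n lam a j) * load n lam a j - (\<Sum>i<n. (lam i * a i j)\<^sup>2) / 2) / mu j
      \<le> (load n lam a j)\<^sup>2 / mu j"
    using assms by (intro divide_right_mono) (auto simp: power2_eq_square sum_nonneg)
qed

lemma sum_load_sq_le_twice_social_cost:
  assumes "\<forall>j<m. mu j > 0" and "\<forall>j<m. s0 j = 0"
    and "\<forall>i<n. lam i \<ge> 0" and "is_profile m n a"
  shows "(\<Sum>j<m. (load n lam a j)\<^sup>2 / mu j) \<le> 2 * social_cost m n mu s0 lam a"
  unfolding social_cost_eq_load sum_distrib_left
proof (rule sum_mono)
  fix j assume j: "j \<in> {..<m}"
  have "(\<Sum>i<n. (lam i * a i j)\<^sup>2) \<le> (load n lam a j)\<^sup>2"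
    unfolding load_def using assms(3,4) j
    by (intro sum_power2_le_power2_sum) (auto simp: is_profile_def is_action_def)
  then have "(load n lam a j)\<^sup>2 / mu j \<le>
      (2 * (load n lam a j)\<^sup>2 - (\<Sum>i<n. (lam i * a i j)\<^sup>2)) / mu j"
    using assms(1) j by (intro divide_right_mono) auto
  then show "(load n lam a j)\<^sup>2 / mu j \<le>
      2 * (((s0 j + load n lam a j) * load n lam a j - (\<Sum>i<n. (lam i * a i j)\<^sup>2) / 2) / mu j)"
    using assms(2) j by (simp add: power2_eq_square)
qed

lemma is_action_segment:
  assumes "is_action m x" and "is_action m y" and "0 \<le> t" and "t \<le> 1"
  shows "is_action m (\<lambda>j. x j + t * (y j - x j))"
proof -
  have "0 \<le> x j + t * (y j - x j)" if "j < m" for j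
  proof -
    have "0 \<le> (1 - t) * x j + t * y j"
      using assms that by (simp add: is_action_def)
    then show ?thesis by (simp add: algebra_simps)
  qed
  moreover have "(\<Sum>j<m. x j + t * (y j - x j)) = 1"
    using assms(1,2) by (simp add: is_action_def sum.distrib sum_subtractf sum_distrib_left[symmetric])
  ultimately show ?thesis by (simp add: is_action_def)
qed

lemma cost_fun_upd_segment:
  assumes "i < n"
  shows "cost m n mu s0 lam (a(i := \<lambda>j. a i j + t * (y j - a i j))) i =
    cost m n mu s0 lam a i
    + t * (\<Sum>j<m. lam i * (y j - a i j) * (s0 j + load n lam a j) / mu j)
    + t\<^sup>2 * (\<Sum>j<m. (lam i * (y j - a i j))\<^sup>2 / (2 * mu j))"
proof -
  have cost_self: "cost m n mu s0 lam a i = (\<Sum>j<m. lam i * a i j * (lam i * a i j / (2 * mu j)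
      + (s0 j + (load n lam a j - lam i * a i j)) / mu j))"
    using cost_fun_upd_self[of m n mu s0 lam a i "a i"] by (simp add: load_minus_player[OF assms])
  show ?thesis
    unfolding cost_fun_upd_self cost_self load_minus_player[OF assms]
      sum_distrib_left sum.distrib[symmetric]
  proof (intro sum.cong refl)
    fix j
    show "lam i * (a i j + t * (y j - a i j)) * (lam i * (a i j + t * (y j - a i j)) / (2 * mu j)
        + (s0 j + (load n lam a j - lam i * a i j)) / mu j) =
      lam i * a i j * (lam i * a i j / (2 * mu j) + (s0 j + (load n lam a j - lam i * a i j)) / mu j)
      + t * (lam i * (y j - a i j) * (s0 j + load n lam a j) / mu j)
      + t\<^sup>2 * ((lam i * (y j - a i j))\<^sup>2 / (2 * mu j))"
      by (cases "mu j = 0") (simp_all add: field_simps power2_eq_square)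
  qed
qed

lemma linear_coeff_nonneg_of_nonneg_on_unit_interval:
  fixes G H :: real
  assumes "\<And>t. 0 < t \<Longrightarrow> t \<le> 1 \<Longrightarrow> 0 \<le> t * G + t\<^sup>2 * H"
  shows "0 \<le> G"
proof (rule ccontr)
  assume "\<not> 0 \<le> G"
  then have G: "G < 0" by simp
  have "0 \<le> G + H" using assms[of 1] by simp
  with G have H: "H > 0" by simp
  define t where "t = min 1 (- G / (2 * H))"
  have t: "0 < t" "t \<le> 1" using G H by (simp_all add: t_def divide_neg_pos)
  have "t \<le> - G / (2 * H)" by (simp add: t_def)
  then have "t * H \<le> - G / 2"
    using H by (simp add: field_simps)
  with G have "G + t * H < 0" by simp
  with t have "t * (G + t * H) < 0"
    by (simp add: mult_pos_neg)
  moreover have "t * G + t\<^sup>2 * H = t * (G + t * H)"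
    by (simp add: power2_eq_square algebra_simps)
  ultimately show False using assms[OF t] by simp
qed

lemma NE_variational_inequality:
  assumes NE: "is_NE m n mu s0 lam a" and i: "i < n" and y: "is_action m y"
  shows "0 \<le> (\<Sum>j<m. lam i * (y j - a i j) * (s0 j + load n lam a j) / mu j)"
proof (rule linear_coeff_nonneg_of_nonneg_on_unit_interval)
  fix t :: real assume t: "0 < t" "t \<le> 1"
  have "is_action m (a i)"
    using NE i by (simp add: is_NE_def is_profile_def)
  then have "is_action m (\<lambda>j. a i j + t * (y j - a i j))"
    using y t by (intro is_action_segment) auto
  then have "cost m n mu s0 lam a i \<le> cost m n mu s0 lam (a(i := \<lambda>j. a i j + t * (y j - a i j))) i"
    using NE i by (simp add: is_NE_def)
  then show "0 \<le> t * (\<Sum>j<m. lam i * (y j - a i j) * (s0 j + load n lam a j) / mu j)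
      + t\<^sup>2 * (\<Sum>j<m. (lam i * (y j - a i j))\<^sup>2 / (2 * mu j))"
    unfolding cost_fun_upd_segment[OF i] by simp
qed

lemma NE_load_inequality:
  assumes NE: "is_NE m n mu s0 lam a" and b: "is_profile m n b"
  shows "0 \<le> (\<Sum>j<m. (load n lam b j - load n lam a j) * (s0 j + load n lam a j) / mu j)"
proof -
  have "0 \<le> (\<Sum>i<n. \<Sum>j<m. lam i * (b i j - a i j) * (s0 j + load n lam a j) / mu j)"
    using b by (intro sum_nonneg NE_variational_inequality[OF NE]) (auto simp: is_profile_def)
  also have "\<dots> = (\<Sum>j<m. \<Sum>i<n. lam i * (b i j - a i j) * (s0 j + load n lam a j) / mu j)"
    by (rule sum.swap)
  also have "\<dots> = (\<Sum>j<m. (load n lam b j - load n lam a j) * (s0 j + load n lam a j) / mu j)"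
    by (simp add: load_def right_diff_distrib sum_subtractf
        sum_distrib_right[symmetric] sum_divide_distrib[symmetric])
  finally show ?thesis .
qed

lemma sum_power2_div_le_of_variational_inequality:
  fixes p q u :: "'a \<Rightarrow> real"
  assumes "finite A" and "\<forall>j\<in>A. u j > 0"
    and "0 \<le> (\<Sum>j\<in>A. (q j - p j) * p j / u j)"
  shows "(\<Sum>j\<in>A. (p j)\<^sup>2 / u j) \<le> (\<Sum>j\<in>A. (q j)\<^sup>2 / u j)"
proof -
  have "(\<Sum>j\<in>A. (q j - p j) * p j / u j) \<le> (\<Sum>j\<in>A. ((q j)\<^sup>2 / u j - (p j)\<^sup>2 / u j) / 2)"
  proof (rule sum_mono)
    fix j assume "j \<in> A"
    have "(q j - p j) * p j \<le> ((q j)\<^sup>2 - (p j)\<^sup>2) / 2"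
      using sum_squares_ge_zero[of "q j - p j" 0] by (simp add: power2_eq_square algebra_simps)
    moreover have "u j > 0" using assms(2) \<open>j \<in> A\<close> by simp
    ultimately have "(q j - p j) * p j / u j \<le> ((q j)\<^sup>2 - (p j)\<^sup>2) / 2 / u j"
      by (intro divide_right_mono) auto
    also have "\<dots> = ((q j)\<^sup>2 / u j - (p j)\<^sup>2 / u j) / 2"
      by (simp add: diff_divide_distrib)
    finally show "(q j - p j) * p j / u j \<le> ((q j)\<^sup>2 / u j - (p j)\<^sup>2 / u j) / 2" .
  qed
  also have "\<dots> = ((\<Sum>j\<in>A. (q j)\<^sup>2 / u j) - (\<Sum>j\<in>A. (p j)\<^sup>2 / u j)) / 2"
    by (simp add: sum_divide_distrib[symmetric] sum_subtractf)
  finally show ?thesis using assms(3) by simp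
qed

lemma NE_social_cost_le_twice:
  assumes mu_pos: "\<forall>j<m. mu j > 0" and lam_nonneg: "\<forall>i<n. lam i \<ge> 0"
    and s0_zero: "\<forall>j<m. s0 j = 0"
    and NE: "is_NE m n mu s0 lam a" and b: "is_profile m n b"
  shows "social_cost m n mu s0 lam a \<le> 2 * social_cost m n mu s0 lam b"
proof -
  have "0 \<le> (\<Sum>j<m. (load n lam b j - load n lam a j) * load n lam a j / mu j)"
    using NE_load_inequality[OF NE b] s0_zero by simp
  then have loads: "(\<Sum>j<m. (load n lam a j)\<^sup>2 / mu j) \<le> (\<Sum>j<m. (load n lam b j)\<^sup>2 / mu j)"
    using mu_pos by (intro sum_power2_div_le_of_variational_inequality) auto
  have "social_cost m n mu s0 lam a \<le> (\<Sum>j<m. (load n lam a j)\<^sup>2 / mu j)"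
    using mu_pos s0_zero by (rule social_cost_le_sum_load_sq)
  also have "\<dots> \<le> (\<Sum>j<m. (load n lam b j)\<^sup>2 / mu j)"
    by (fact loads)
  also have "\<dots> \<le> 2 * social_cost m n mu s0 lam b"
    using mu_pos s0_zero lam_nonneg b by (rule sum_load_sq_le_twice_social_cost)
  finally show ?thesis .
qed

theorem corollary1:
  fixes m n :: nat and mu s0 lam :: "nat \<Rightarrow> real"
    and a b :: "nat \<Rightarrow> nat \<Rightarrow> real"
  assumes mu_pos: "\<forall>j<m. mu j > 0"
    and lam_pos: "\<forall>i<n. lam i > 0"
    and s0_zero: "\<forall>j<m. s0 j = 0"
    and NE: "is_NE m n mu s0 lam a"
    and prof: "is_profile m n b"
  shows "social_cost m n mu s0 lam a \<le> 3 * social_cost m n mu s0 lam b"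
proof -
  have lam_nonneg: "\<forall>i<n. lam i \<ge> 0"
    using lam_pos by (simp add: less_imp_le)
  have "0 \<le> (\<Sum>j<m. (load n lam b j)\<^sup>2 / mu j)"
    using mu_pos by (intro sum_nonneg) (simp add: less_imp_le)
  also have "\<dots> \<le> 2 * social_cost m n mu s0 lam b"
    using mu_pos s0_zero lam_nonneg prof by (rule sum_load_sq_le_twice_social_cost)
  finally have "0 \<le> social_cost m n mu s0 lam b" by simp
  moreover have "social_cost m n mu s0 lam a \<le> 2 * social_cost m n mu s0 lam b"
    using mu_pos lam_nonneg s0_zero NE prof by (rule NE_social_cost_le_twice)
  ultimately show ?thesis by linarith
qed

end
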